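(* Let $f:\mathbb{R}^n\to\mathbb{R}$ be differentiable, $L$-smooth and $m$-strongly convex with $m>0$, and let $x_*$ be the unique point with $\nabla f(x_* )=0$. Let $0<\mu<2$, $\delta>0$, $\alpha>0$, $\eta>0$ and constants $0<c_1\le c_2<+\infty$. Consider the AFOAGD iteration $$x_{k+1}=y_k-\alpha\,\nabla f(y_k)\,\beta_k\,(\|y_k-y_{k-1}\|_2+\delta)^{1-\mu},\qquad y_k=x_k+\eta(x_k-x_{k-1}),$$ where the scalars $\beta_k>0$ satisfy $0<c_1\le \beta_k(\|y_k-y_{k-1}\|_2+\delta)^{1-\mu}\le c_2<+\infty$ for all $k$. Set $u_k=\nabla f(y_k)\,\beta_k(\|y_k-y_{k-1}\|_2+\delta)^{1-\mu}$, $u_*=0$, and $e_k=[(x_{k-1}-x_* )^\top,(x_k-x_* )^\top,(u_k-u_* )^\top]^\top\in\mathbb{R}^{3n}$. Let $\psi:\mathbb{R}\to\mathbb{R}$ be given by $\psi(s)=1$ if $s\ge 0$ and $\psi(s)=0$ otherwise, and write $\psi_k=\psi\big(\nabla f(y_k)^\top(y_k-x_k)\big)$. Then for all trajectories and all $k$, $$f(x_{k+1})-f(x_k)\le e_k^\top N^2 e_k,$$ where $$N^2=\psi_k\begin{bmatrix}-\frac{\eta^2 m}{2}I_n & \frac{\eta^2 m}{2}I_n & -\frac{\eta}{2c_1}I_n\\ \frac{\eta^2 m}{2}I_n & -\frac{\eta^2 m}{2}I_n & \frac{\eta}{2c_1}I_n\\ -\frac{\eta}{2c_1}I_n & \frac{\eta}{2c_1}I_n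 & \left(\frac12\alpha^2L-\frac{\alpha}{c_2}\right)I_n\end{bmatrix}+(1-\psi_k)\begin{bmatrix}-\frac{\eta^2 m}{2}I_n & \frac{\eta^2 m}{2}I_n & -\frac{\eta}{2c_2}I_n\\ \frac{\eta^2 m}{2}I_n & -\frac{\eta^2 m}{2}I_n & \frac{\eta}{2c_2}I_n\\ -\frac{\eta}{2c_2}I_n & \frac{\eta}{2c_2}I_n & \left(\frac12\alpha^2L-\frac{\alpha}{c_2}\right)I_n\end{bmatrix}.$$
   Context: A differentiable $f$ is $L$-smooth if $\|\nabla f(x)-\nabla f(y)\|_2\le L\|x-y\|_2$ for all $x,y$, and $m$-strongly convex if $m\|x-y\|_2^2\le (x-y)^\top(\nabla f(x)-\nabla f(y))$ for all $x,y$. $I_n$ is the $n\times n$ identity matrix. *)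

theory Defs
  imports "HOL-Analysis.Analysis"
begin

text \<open>The gradient of f is represented by a function g with
  (f has_derivative (\<lambda>h. g x \<bullet> h)) (at x) for all x.\<close>

definition L_smooth :: "real \<Rightarrow> ('a::real_inner \<Rightarrow> 'a) \<Rightarrow> bool" where
  "L_smooth L g \<longleftrightarrow> (\<forall>x y. norm (g x - g y) \<le> L * norm (x - y))"

definition strongly_convex_grad :: "real \<Rightarrow> ('a::real_inner \<Rightarrow> 'a) \<Rightarrow> bool" where
  "strongly_convex_grad m g \<longleftrightarrow> (\<forall>x y. m * (norm (x - y))\<^sup>2 \<le> (x - y) \<bullet> (g x - g y))"

definition psi :: "real \<Rightarrow> real" where
  "psi s = (if s \<ge> 0 then 1 else 0)"

text \<open>Quadratic form e^T (M \<otimes> I_n) e for e = [a; b; c] with a 3x3 block coefficient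
  matrix M (given as a list of rows).\<close>
definition kron_quad3 :: "real list list \<Rightarrow> 'a::real_inner \<Rightarrow> 'a \<Rightarrow> 'a \<Rightarrow> real" where
  "kron_quad3 M a b c =
     (\<Sum>i<3. \<Sum>j<3. (M ! i ! j) * (([a, b, c] ! i) \<bullet> ([a, b, c] ! j)))"

definition Nblock :: "real \<Rightarrow> real \<Rightarrow> real \<Rightarrow> real \<Rightarrow> real \<Rightarrow> real \<Rightarrow> real list list" where
  "Nblock \<eta> m \<alpha> L c c2 =
    [[- (\<eta>\<^sup>2 * m / 2),   \<eta>\<^sup>2 * m / 2,  - (\<eta> / (2 * c))],
     [  \<eta>\<^sup>2 * m / 2,  - (\<eta>\<^sup>2 * m / 2),   \<eta> / (2 * c)],
     [- (\<eta> / (2 * c)),    \<eta> / (2 * c),  (1/2) * \<alpha>\<^sup>2 * L - \<alpha> / c2]]"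

definition N2mat :: "real \<Rightarrow> real \<Rightarrow> real \<Rightarrow> real \<Rightarrow> real \<Rightarrow> real \<Rightarrow> real \<Rightarrow> real list list" where
  "N2mat p \<eta> m \<alpha> L c1 c2 =
     map2 (map2 (\<lambda>s t. p * s + (1 - p) * t))
       (Nblock \<eta> m \<alpha> L c1 c2) (Nblock \<eta> m \<alpha> L c2 c2)"

end

theory Submission
  imports Defs
begin

text \<open>Descent lemma for f(x_{k+1}) and strong-convexity lower bound for f(x_k), both
  expanded around the extrapolated point y_k, give
  f(x_{k+1}) - f(x_k) \<le> -\<alpha> s |\<nabla>f(y_k)|^2 + L/2 \<alpha>^2 s^2 |\<nabla>f(y_k)|^2
    + \<nabla>f(y_k) \<bullet> (y_k - x_k) - m/2 |y_k - x_k|^2,  where u_k = s \<nabla>f(y_k), c1 \<le> s \<le> c2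
  and y_k - x_k = \<eta> (x_k - x_{k-1}).
  Then s \<le> c2 bounds the first term by -\<alpha>/c2 |u_k|^2, and the cross term is bounded by
  (\<eta>/c) (x_k - x_{k-1}) \<bullet> u_k with c = c1 or c = c2 according to its sign, which is what
  \<psi>_k selects.\<close>

lemma has_real_derivative_along_line:
  fixes f :: "'a::real_inner \<Rightarrow> real"
  assumes grad: "\<And>z. (f has_derivative (\<lambda>h. g z \<bullet> h)) (at z)"
  shows "((\<lambda>t. f (y + t *\<^sub>R d)) has_real_derivative (g (y + t *\<^sub>R d) \<bullet> d)) (at t)"
proof -
  have "((\<lambda>t. y + t *\<^sub>R d) has_derivative (\<lambda>h. h *\<^sub>R d)) (at t)"
    by (auto intro!: derivative_eq_intros)
  from has_derivative_compose[OF this grad]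
  have "((\<lambda>t. f (y + t *\<^sub>R d)) has_derivative (\<lambda>h. g (y + t *\<^sub>R d) \<bullet> (h *\<^sub>R d))) (at t)"
    by (simp add: o_def)
  then show ?thesis
    unfolding has_field_derivative_def
    by (rule has_derivative_eq_rhs) (simp add: fun_eq_iff mult.commute)
qed

lemma first_order_remainder_le:
  fixes f :: "'a::real_inner \<Rightarrow> real"
  assumes grad: "\<And>z. (f has_derivative (\<lambda>h. g z \<bullet> h)) (at z)"
    and incr: "\<And>t. 0 \<le> t \<Longrightarrow> t \<le> 1 \<Longrightarrow> (g (y + t *\<^sub>R d) - g y) \<bullet> d \<le> C * t * (norm d)\<^sup>2"
  shows "f (y + d) \<le> f y + g y \<bullet> d + C / 2 * (norm d)\<^sup>2"
proof -
  define \<phi> where "\<phi> t = f y + t * (g y \<bullet> d) + C / 2 * t\<^sup>2 * (norm d)\<^sup>2 - f (y + t *\<^sub>R d)" for t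
  have "\<phi> 0 \<le> \<phi> 1"
  proof (rule DERIV_nonneg_imp_nondecreasing[of 0 1])
    fix t :: real assume "0 \<le> t" "t \<le> 1"
    have "((\<lambda>t. f y + t * (g y \<bullet> d) + C / 2 * t\<^sup>2 * (norm d)\<^sup>2)
        has_real_derivative (g y \<bullet> d + C * t * (norm d)\<^sup>2)) (at t)"
      by (auto intro!: derivative_eq_intros simp: algebra_simps)
    from DERIV_diff[OF this has_real_derivative_along_line[OF grad]]
    have "(\<phi> has_real_derivative (g y \<bullet> d + C * t * (norm d)\<^sup>2 - g (y + t *\<^sub>R d) \<bullet> d)) (at t)"
      unfolding \<phi>_def by simp
    moreover have "0 \<le> g y \<bullet> d + C * t * (norm d)\<^sup>2 - g (y + t *\<^sub>R d) \<bullet> d"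
      using incr[OF \<open>0 \<le> t\<close> \<open>t \<le> 1\<close>] by (simp add: inner_diff_left)
    ultimately show "\<exists>D. (\<phi> has_real_derivative D) (at t) \<and> 0 \<le> D" by blast
  qed simp
  then show ?thesis unfolding \<phi>_def by simp
qed

lemma L_smooth_descent:
  fixes f :: "'a::real_inner \<Rightarrow> real"
  assumes grad: "\<And>z. (f has_derivative (\<lambda>h. g z \<bullet> h)) (at z)"
    and smooth: "L_smooth L g"
  shows "f z \<le> f y + g y \<bullet> (z - y) + L / 2 * (norm (z - y))\<^sup>2"
proof -
  have "(g (y + t *\<^sub>R d) - g y) \<bullet> d \<le> L * t * (norm d)\<^sup>2" if "0 \<le> t" for t and d :: 'a
  proof -
    have "(g (y + t *\<^sub>R d) - g y) \<bullet> d \<le> norm (g (y + t *\<^sub>R d) - g y) * norm d"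
      by (rule norm_cauchy_schwarz)
    also have "\<dots> \<le> L * norm (t *\<^sub>R d) * norm d"
      using smooth unfolding L_smooth_def
      by (metis add_diff_cancel_left' mult_right_mono norm_ge_zero)
    also have "\<dots> = L * t * (norm d)\<^sup>2"
      using that by (simp add: power2_eq_square)
    finally show ?thesis .
  qed
  from first_order_remainder_le[OF grad this, of "z - y"] show ?thesis by simp
qed

lemma strongly_convex_grad_lower_bound:
  fixes f :: "'a::real_inner \<Rightarrow> real"
  assumes grad: "\<And>z. (f has_derivative (\<lambda>h. g z \<bullet> h)) (at z)"
    and sconv: "strongly_convex_grad m g"
  shows "f y + g y \<bullet> (z - y) + m / 2 * (norm (z - y))\<^sup>2 \<le> f z"
proof -
  \<comment> \<open>The lower bound for f is the upper remainder bound for -f with constant -m.\<close>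
  have grad_neg: "((\<lambda>x. - f x) has_derivative (\<lambda>h. - g x \<bullet> h)) (at x)" for x
    using has_derivative_minus[OF grad[of x]] by simp
  have "(- g (y + t *\<^sub>R d) - - g y) \<bullet> d \<le> - m * t * (norm d)\<^sup>2" if "0 \<le> t" for t and d :: 'a
  proof (cases "t = 0")
    case False
    with that have "t > 0" by simp
    have "m * (norm (t *\<^sub>R d))\<^sup>2 \<le> (t *\<^sub>R d) \<bullet> (g (y + t *\<^sub>R d) - g y)"
      using sconv unfolding strongly_convex_grad_def by (metis add_diff_cancel_left')
    then have "t * (m * t * (norm d)\<^sup>2) \<le> t * ((g (y + t *\<^sub>R d) - g y) \<bullet> d)"
      by (simp add: power2_eq_square inner_commute algebra_simps)
    with \<open>t > 0\<close> show ?thesis by (simp add: inner_diff_left)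
  qed simp
  from first_order_remainder_le[OF grad_neg this, of "z - y"] show ?thesis by simp
qed

lemma kron_quad3_N2mat:
  fixes a b u :: "'a::real_inner"
  shows "kron_quad3 (N2mat p \<eta> m \<alpha> L c1 c2) a b u =
    - (\<eta>\<^sup>2 * m / 2) * (norm (b - a))\<^sup>2 + (p * \<eta> / c1 + (1 - p) * \<eta> / c2) * ((b - a) \<bullet> u)
    + ((1/2) * \<alpha>\<^sup>2 * L - \<alpha> / c2) * (norm u)\<^sup>2"
  unfolding kron_quad3_def N2mat_def Nblock_def
  by (simp add: numeral_3_eq_3 lessThan_Suc power2_norm_eq_inner inner_diff_left
      inner_diff_right inner_commute algebra_simps add_divide_distrib diff_divide_distrib)

lemma psi_weighted_le:
  fixes t s c1 c2 :: real
  assumes "0 < c1" "c1 \<le> s" "s \<le> c2"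
  shows "t \<le> (psi t / c1 + (1 - psi t) / c2) * (s * t)"
proof (cases "t \<ge> 0")
  case True
  have "1 * t \<le> (s / c1) * t"
    using True assms by (intro mult_right_mono) auto
  with True show ?thesis by (simp add: psi_def)
next
  case False
  have "1 * t \<le> (s / c2) * t"
    using False assms by (intro mult_right_mono_neg) auto
  with False show ?thesis by (simp add: psi_def)
qed

lemma afoagd_step_bound:
  fixes f :: "'a::real_inner \<Rightarrow> real"
  assumes grad: "\<And>z. (f has_derivative (\<lambda>h. g z \<bullet> h)) (at z)"
    and smooth: "L_smooth L g" and sconv: "strongly_convex_grad m g"
    and \<alpha>: "\<alpha> > 0" and \<eta>: "\<eta> > 0" and s: "0 < c1" "c1 \<le> s" "s \<le> c2"
    and y: "y = x1 + \<eta> *\<^sub>R (x1 - x0)"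
    and x2: "x2 = y - (\<alpha> * s) *\<^sub>R g y"
  shows "f x2 - f x1 \<le>
    kron_quad3 (N2mat (psi (g y \<bullet> (y - x1))) \<eta> m \<alpha> L c1 c2) (x0 - xs) (x1 - xs) (s *\<^sub>R g y)"
proof -
  define G where "G = g y"
  define v where "v = x1 - x0"
  define p where "p = psi (G \<bullet> v)"
  have p: "psi (g y \<bullet> (y - x1)) = p"
    using \<eta> by (simp add: y G_def v_def p_def psi_def zero_le_mult_iff)
  have "f x2 \<le> f y - \<alpha> * s * (norm G)\<^sup>2 + L / 2 * (\<alpha>\<^sup>2 * s\<^sup>2 * (norm G)\<^sup>2)"
    using L_smooth_descent[OF grad smooth, of x2 y]
    by (simp add: x2 G_def power2_norm_eq_inner power_mult_distrib)
  moreover have "f y - \<eta> * (G \<bullet> v) + m / 2 * (\<eta>\<^sup>2 * (norm v)\<^sup>2) \<le> f x1"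
    using strongly_convex_grad_lower_bound[OF grad sconv, of y x1] \<eta>
    by (simp add: y G_def v_def power_mult_distrib)
  moreover have "- \<alpha> * s * (norm G)\<^sup>2 \<le> - \<alpha> / c2 * (s\<^sup>2 * (norm G)\<^sup>2)"
  proof -
    have "s\<^sup>2 / c2 \<le> s"
      using s by (simp add: power2_eq_square field_simps mult_left_mono)
    from mult_left_mono[OF this, of "\<alpha> * (norm G)\<^sup>2"] \<alpha> show ?thesis
      by (simp add: algebra_simps)
  qed
  moreover have "\<eta> * (G \<bullet> v) \<le> (p * \<eta> / c1 + (1 - p) * \<eta> / c2) * (s * (G \<bullet> v))"
    using mult_left_mono[OF psi_weighted_le[OF s, of "G \<bullet> v"], of \<eta>] \<eta>
    by (simp add: p_def algebra_simps)
  ultimately show ?thesis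
    unfolding p kron_quad3_N2mat
    by (simp add: G_def v_def power_mult_distrib inner_commute algebra_simps)
qed

theorem lemma2:
  fixes f :: "real^'n \<Rightarrow> real" and g :: "real^'n \<Rightarrow> real^'n"
    and L m \<mu> \<delta> \<alpha> \<eta> c1 c2 :: real
    and xs :: "real^'n"
    and x y :: "nat \<Rightarrow> real^'n" and \<beta> :: "nat \<Rightarrow> real"
    and k :: nat
  assumes grad: "\<And>z. (f has_derivative (\<lambda>h. g z \<bullet> h)) (at z)"
    and smooth: "L_smooth L g"
    and sconv: "strongly_convex_grad m g" and m_pos: "m > 0"
    and xs_crit: "g xs = 0" and xs_unique: "\<And>z. g z = 0 \<Longrightarrow> z = xs"
    and \<mu>: "0 < \<mu>" "\<mu> < 2" and \<delta>: "\<delta> > 0" and \<alpha>: "\<alpha> > 0" and \<eta>: "\<eta> > 0"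
    and c: "0 < c1" "c1 \<le> c2"
    and y_def: "\<And>j. j \<ge> 1 \<Longrightarrow> y j = x j + \<eta> *\<^sub>R (x j - x (j - 1))"
    and x_step: "\<And>j. j \<ge> 1 \<Longrightarrow>
        x (j + 1) = y j - (\<alpha> * \<beta> j * (norm (y j - y (j - 1)) + \<delta>) powr (1 - \<mu>)) *\<^sub>R g (y j)"
    and \<beta>_pos: "\<And>j. j \<ge> 1 \<Longrightarrow> \<beta> j > 0"
    and \<beta>_bounds: "\<And>j. j \<ge> 1 \<Longrightarrow>
        c1 \<le> \<beta> j * (norm (y j - y (j - 1)) + \<delta>) powr (1 - \<mu>)
        \<and> \<beta> j * (norm (y j - y (j - 1)) + \<delta>) powr (1 - \<mu>) \<le> c2"
    and k: "k \<ge> 1"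
  shows "f (x (k + 1)) - f (x k) \<le>
    (let u = (\<beta> k * (norm (y k - y (k - 1)) + \<delta>) powr (1 - \<mu>)) *\<^sub>R g (y k);
         p = psi (g (y k) \<bullet> (y k - x k))
     in kron_quad3 (N2mat p \<eta> m \<alpha> L c1 c2) (x (k - 1) - xs) (x k - xs) (u - 0))"
proof -
  define s where "s = \<beta> k * (norm (y k - y (k - 1)) + \<delta>) powr (1 - \<mu>)"
  have "c1 \<le> s" "s \<le> c2"
    using \<beta>_bounds[OF k] by (auto simp: s_def)
  moreover have "x (k + 1) = y k - (\<alpha> * s) *\<^sub>R g (y k)"
    using x_step[OF k] by (simp add: s_def mult.assoc)
  ultimately show ?thesis
    using afoagd_step_bound[OF grad smooth sconv \<alpha> \<eta> \<open>0 < c1\<close> _ _ y_def[OF k]]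
    by (simp add: s_def Let_def)
qed

end
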